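(* Let $E\in M_n(\mathbb{FT})$ be an idempotent of rank $n$, let $A$ be an element of the $\mathcal H$-class of $E$ in $M_n(\mathbb{FT})$, and let $\widehat{\phi_A}:\mathcal{P}C(E)\to\mathcal{P}C(E)$ be the map induced on the projectivisation of $C(E)$ by left multiplication $x\mapsto A\otimes x$. Then, identifying projective space with $\mathbb{R}^{n-1}$ via $(x_1,\dots,x_n)\mapsto(x_1-x_n,\dots,x_{n-1}-x_n)$, the map $\widehat{\phi_A}$ is the restriction to $\mathcal{P}C(E)\subseteq\mathbb{R}^{n-1}$ of a classical affine linear map.
   Context: $\mathbb{FT}$ is $\mathbb{R}$ with $a\oplus b=\max(a,b)$, $a\otimes b=a+b$; $M_n(\mathbb{FT})$ is the semigroup of real $n\times n$ matrices under $(A\otimes B)_{i,j}=\max_k(A_{i,k}+B_{k,j})$, acting on $\mathbb{FT}^n$ similarly. $C(E)$ is the set of finite componentwise maxima of columns of $E$ shifted by real constants; the rank of an idempotent $E$ is the minimal cardinality of a generating set of $C(E)$. Projective tropical $(n-1)$-space is $\mathbb{R}^n$ modulo $x\sim y$ iff $y=x+\lambda(1,\dots,1)$ for some $\lambda\in\mathbb{R}$; $\mathcal{P}C(E)$ is the image of $C(E)$ there. Green's relations: $a\,\mathcal{R}\,b$ iff $aS^1=bS^1$, $a\,\mathcal{L}\,b$ iff $S^1a=S^1b$, $\mathcal{H}=\mathcal{L}\cap\mathcal{R}$. *)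

theory Defs
  imports Complex_Main
begin

text \<open>Tropical (max-plus) n x n matrices and n-vectors, represented as functions on
  natural-number indices, normalised to 0 outside the index range 0..n-1.\<close>

definition tmats :: "nat \<Rightarrow> (nat \<Rightarrow> nat \<Rightarrow> real) set" where
  "tmats n = {M. \<forall>i j. \<not> (i < n \<and> j < n) \<longrightarrow> M i j = 0}"

definition tvecs :: "nat \<Rightarrow> (nat \<Rightarrow> real) set" where
  "tvecs n = {x. \<forall>i. n \<le> i \<longrightarrow> x i = 0}"

definition tmul :: "nat \<Rightarrow> (nat \<Rightarrow> nat \<Rightarrow> real) \<Rightarrow> (nat \<Rightarrow> nat \<Rightarrow> real) \<Rightarrow> (nat \<Rightarrow> nat \<Rightarrow> real)" where
  "tmul n A B = (\<lambda>i j. if i < n \<and> j < n then Max {A i k + B k j | k. k < n} else 0)"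

definition tact :: "nat \<Rightarrow> (nat \<Rightarrow> nat \<Rightarrow> real) \<Rightarrow> (nat \<Rightarrow> real) \<Rightarrow> (nat \<Rightarrow> real)" where
  "tact n A x = (\<lambda>i. if i < n then Max {A i k + x k | k. k < n} else 0)"

definition tidempotent :: "nat \<Rightarrow> (nat \<Rightarrow> nat \<Rightarrow> real) \<Rightarrow> bool" where
  "tidempotent n E \<longleftrightarrow> E \<in> tmats n \<and> tmul n E E = E"

definition tspan :: "nat \<Rightarrow> (nat \<Rightarrow> real) set \<Rightarrow> (nat \<Rightarrow> real) set" where
  "tspan n G = {x \<in> tvecs n. \<exists>S c. finite S \<and> S \<noteq> {} \<and> S \<subseteq> G \<and>
      (\<forall>i<n. x i = Max {c g + g i | g. g \<in> S})}"

definition tcol :: "nat \<Rightarrow> (nat \<Rightarrow> nat \<Rightarrow> real) \<Rightarrow> nat \<Rightarrow> (nat \<Rightarrow> real)" where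
  "tcol n E j = (\<lambda>i. if i < n then E i j else 0)"

definition colspace :: "nat \<Rightarrow> (nat \<Rightarrow> nat \<Rightarrow> real) \<Rightarrow> (nat \<Rightarrow> real) set" where
  "colspace n E = tspan n (tcol n E ` {..<n})"

definition trank :: "nat \<Rightarrow> (nat \<Rightarrow> nat \<Rightarrow> real) \<Rightarrow> nat" where
  "trank n E = (LEAST k. \<exists>G. finite G \<and> card G = k \<and> G \<subseteq> tvecs n \<and> tspan n G = colspace n E)"

text \<open>Green's relations in the semigroup S = M_n(FT), with S^1 = S plus adjoined identity.\<close>
definition right_ideal1 :: "nat \<Rightarrow> (nat \<Rightarrow> nat \<Rightarrow> real) \<Rightarrow> (nat \<Rightarrow> nat \<Rightarrow> real) set" where
  "right_ideal1 n a = insert a ((\<lambda>s. tmul n a s) ` tmats n)"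

definition left_ideal1 :: "nat \<Rightarrow> (nat \<Rightarrow> nat \<Rightarrow> real) \<Rightarrow> (nat \<Rightarrow> nat \<Rightarrow> real) set" where
  "left_ideal1 n a = insert a ((\<lambda>s. tmul n s a) ` tmats n)"

definition greenR :: "nat \<Rightarrow> (nat \<Rightarrow> nat \<Rightarrow> real) \<Rightarrow> (nat \<Rightarrow> nat \<Rightarrow> real) \<Rightarrow> bool" where
  "greenR n a b \<longleftrightarrow> right_ideal1 n a = right_ideal1 n b"

definition greenL :: "nat \<Rightarrow> (nat \<Rightarrow> nat \<Rightarrow> real) \<Rightarrow> (nat \<Rightarrow> nat \<Rightarrow> real) \<Rightarrow> bool" where
  "greenL n a b \<longleftrightarrow> left_ideal1 n a = left_ideal1 n b"

definition greenH :: "nat \<Rightarrow> (nat \<Rightarrow> nat \<Rightarrow> real) \<Rightarrow> (nat \<Rightarrow> nat \<Rightarrow> real) \<Rightarrow> bool" where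
  "greenH n a b \<longleftrightarrow> greenL n a b \<and> greenR n a b"

definition projcoord :: "nat \<Rightarrow> (nat \<Rightarrow> real) \<Rightarrow> (nat \<Rightarrow> real)" where
  "projcoord n x = (\<lambda>i. if i < n - 1 then x i - x (n - 1) else 0)"

end

theory Submission
  imports Defs
begin

text \<open>
  Every \<open>x \<in> C(E)\<close> satisfies \<open>E i k + x k \<le> x i\<close>. For an idempotent of full rank no column is a
  tropical combination of the others, which forces a zero diagonal and forbids two rows of \<open>E\<close>
  from differing by a constant. Green's relations make every row of \<open>A\<close> dominated by shifts
  of rows of \<open>E\<close>, and every row of \<open>E\<close> a shifted row of \<open>A\<close>; by the previous fact the resulting
  assignment of rows is injective, hence a permutation \<open>\<tau>\<close> with \<open>A k l = r k + E (\<tau> k) l\<close>.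
  On \<open>C(E)\<close> this gives \<open>(A \<otimes> x) k = r k + x (\<tau> k)\<close>: a permutation of coordinates followed by
  a translation, which is affine in the coordinates \<open>x i - x (n - 1)\<close>.
\<close>

declare Setcompr_eq_image [simp]

lemma setcompr_lessThan_eq_image [simp]: "{f k | k. k < (n::nat)} = f ` {..<n}"
  by auto

lemma Max_image_eqI:
  fixes f :: "'a \<Rightarrow> 'b::linorder"
  assumes "finite K" "\<And>k. k \<in> K \<Longrightarrow> f k \<le> m" "k \<in> K" "f k = m"
  shows "Max (f ` K) = m"
  using assms by (intro Max_eqI) auto

lemma Max_image_attained:
  fixes f :: "'a \<Rightarrow> 'b::linorder"
  assumes "finite K" "K \<noteq> {}"
  obtains k where "k \<in> K" "Max (f ` K) = f k"
proof -
  have "Max (f ` K) \<in> f ` K" using assms by simp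
  then show thesis using that by blast
qed

lemma tmul_ge: "i < n \<Longrightarrow> j < n \<Longrightarrow> k < n \<Longrightarrow> A i k + B k j \<le> tmul n A B i j"
  unfolding tmul_def by simp

lemma tmul_attained:
  assumes "i < n" "j < n"
  obtains k where "k < n" "tmul n A B i j = A i k + B k j"
  using assms Max_image_attained[of "{..<n}" "\<lambda>k. A i k + B k j"] unfolding tmul_def by auto

lemma tact_ge: "i < n \<Longrightarrow> k < n \<Longrightarrow> A i k + x k \<le> tact n A x i"
  unfolding tact_def by simp

lemma tact_attained:
  assumes "i < n"
  obtains k where "k < n" "tact n A x i = A i k + x k"
  using assms Max_image_attained[of "{..<n}" "\<lambda>k. A i k + x k"] unfolding tact_def by auto

lemma tact_in_tvecs: "tact n A x \<in> tvecs n"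
  unfolding tact_def tvecs_def by simp

lemma tcol_in_tvecs: "tcol n E j \<in> tvecs n"
  unfolding tcol_def tvecs_def by simp

lemma tspanE:
  assumes "x \<in> tspan n G"
  obtains S c where "finite S" "S \<noteq> {}" "S \<subseteq> G" "\<And>i. i < n \<Longrightarrow> x i = Max ((\<lambda>g. c g + g i) ` S)"
  using assms unfolding tspan_def by auto

lemma tspan_mono: "G \<subseteq> H \<Longrightarrow> tspan n G \<subseteq> tspan n H"
  unfolding tspan_def by blast

lemma tspan_generator: "g \<in> tvecs n \<Longrightarrow> g \<in> G \<Longrightarrow> g \<in> tspan n G"
  unfolding tspan_def by (intro CollectI conjI exI[of _ "{g}"] exI[of _ "\<lambda>_. 0"]) auto

text \<open>Combinations may be indexed by any finite family of generators; repeated generators are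
  merged by taking the largest of their coefficients.\<close>
lemma tspan_familyI:
  assumes K: "finite K" "K \<noteq> {}" "f ` K \<subseteq> G" and "x \<in> tvecs n"
    and x: "\<And>i. i < n \<Longrightarrow> x i = Max ((\<lambda>k. c k + f k i) ` K)"
  shows "x \<in> tspan n G"
proof -
  define c' where "c' g = Max (c ` {k \<in> K. f k = g})" for g
  have c'_ge: "c k \<le> c' (f k)" if "k \<in> K" for k
    unfolding c'_def using K(1) that by (intro Max_ge) auto
  have c'_attained: "\<exists>k \<in> K. f k = g \<and> c' g = c k" if "g \<in> f ` K" for g
    using Max_image_attained[of "{k \<in> K. f k = g}" c] K(1) that unfolding c'_def by auto
  have "x i = Max ((\<lambda>g. c' g + g i) ` f ` K)" if i: "i < n" for i
  proof -
    have bound: "c' g + g i \<le> x i" if "g \<in> f ` K" for g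
      using c'_attained[OF that] x[OF i] K(1) by (force intro: Max_ge)
    obtain k where "k \<in> K" "x i = c k + f k i"
      using Max_image_attained[OF K(1,2), of "\<lambda>k. c k + f k i"] x[OF i] by auto
    with bound c'_ge have "c' (f k) + f k i = x i" by force
    with \<open>k \<in> K\<close> bound K(1) show ?thesis by (intro Max_image_eqI[symmetric]) auto
  qed
  with assms show ?thesis
    unfolding tspan_def by (intro CollectI conjI exI[of _ "f ` K"] exI[of _ c']) auto
qed

lemma tspan_tcolI:
  assumes "finite K" "K \<noteq> {}" "K \<subseteq> {..<n}" "x \<in> tvecs n"
    and "\<And>i. i < n \<Longrightarrow> x i = Max ((\<lambda>k. c k + E i k) ` K)"
  shows "x \<in> tspan n (tcol n E ` K)"
proof (rule tspan_familyI[where f = "tcol n E" and c = c])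
  fix i assume "i < n"
  then have "(\<lambda>k. c k + tcol n E k i) ` K = (\<lambda>k. c k + E i k) ` K" by (simp add: tcol_def)
  with assms(5) \<open>i < n\<close> show "x i = Max ((\<lambda>k. c k + tcol n E k i) ` K)" by simp
qed (use assms in auto)

text \<open>A combination of combinations is a combination indexed by the pairs \<open>(h, g)\<close> with \<open>g\<close> a
  generator used for \<open>h\<close>.\<close>
lemma tspan_tspan_subset: "tspan n (tspan n G) \<subseteq> tspan n G"
proof
  fix x assume "x \<in> tspan n (tspan n G)"
  then obtain S c where S: "finite S" "S \<noteq> {}" "S \<subseteq> tspan n G" "x \<in> tvecs n"
    and x: "\<And>i. i < n \<Longrightarrow> x i = Max ((\<lambda>h. c h + h i) ` S)"
    unfolding tspan_def by auto
  have "\<forall>h \<in> S. \<exists>T d. finite T \<and> T \<noteq> {} \<and> T \<subseteq> G \<and> (\<forall>i<n. h i = Max ((\<lambda>g. d g + g i) ` T))"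
    using S(3) unfolding tspan_def by auto
  then obtain T where "\<forall>h \<in> S. \<exists>d. finite (T h) \<and> T h \<noteq> {} \<and> T h \<subseteq> G \<and>
      (\<forall>i<n. h i = Max ((\<lambda>g. d g + g i) ` T h))"
    by (rule bchoice[elim_format]) blast
  then obtain d where "\<forall>h \<in> S. finite (T h) \<and> T h \<noteq> {} \<and> T h \<subseteq> G \<and>
      (\<forall>i<n. h i = Max ((\<lambda>g. d h g + g i) ` T h))"
    by (rule bchoice[elim_format]) blast
  then have T: "\<And>h. h \<in> S \<Longrightarrow> finite (T h) \<and> T h \<noteq> {} \<and> T h \<subseteq> G"
    and h: "\<And>h i. h \<in> S \<Longrightarrow> i < n \<Longrightarrow> h i = Max ((\<lambda>g. d h g + g i) ` T h)"
    by auto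
  let ?summand = "\<lambda>i (h, g). c h + d h g + g i"
  show "x \<in> tspan n G"
  proof (rule tspan_familyI[where f = snd and K = "Sigma S T" and c = "\<lambda>(h, g). c h + d h g"])
    show "finite (Sigma S T)" "Sigma S T \<noteq> {}" using S(1,2) T by auto
    show "snd ` Sigma S T \<subseteq> G" using T by fastforce
    fix i assume i: "i < n"
    have bound: "?summand i p \<le> x i" if "p \<in> Sigma S T" for p
    proof -
      obtain h g where p: "p = (h, g)" "h \<in> S" "g \<in> T h" using \<open>p \<in> Sigma S T\<close> by auto
      have "d h g + g i \<le> h i" using h[OF p(2) i] T[OF p(2)] p(3) by simp
      moreover have "c h + h i \<le> x i" using x[OF i] S(1) p(2) by simp
      ultimately show ?thesis using p(1) by simp
    qed
    obtain h where h_in: "h \<in> S" "x i = c h + h i"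
      using Max_image_attained[OF S(1,2), of "\<lambda>h. c h + h i"] x[OF i] by auto
    moreover obtain g where "g \<in> T h" "h i = d h g + g i"
      using Max_image_attained[of "T h" "\<lambda>g. d h g + g i"] T[OF h_in(1)] h[OF h_in(1) i] by auto
    ultimately have "?summand i (h, g) = x i" "(h, g) \<in> Sigma S T" by auto
    with bound S(1) T show "x i = Max ((\<lambda>k. (case k of (h, g) \<Rightarrow> c h + d h g) + snd k i) ` Sigma S T)"
      by (intro Max_image_eqI[symmetric]) (auto split: prod.splits)
  qed (use S(4) in simp)
qed

lemma tidempotent_triangle:
  assumes "tidempotent n E" "i < n" "k < n" "m < n"
  shows "E i k + E k m \<le> E i m"
  using tmul_ge[of i n m k E E] assms unfolding tidempotent_def by simp

lemma colspace_triangle: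
  assumes "tidempotent n E" "x \<in> colspace n E" "i < n" "k < n"
  shows "E i k + x k \<le> x i"
proof -
  obtain S c where S: "finite S" "S \<noteq> {}" "S \<subseteq> tcol n E ` {..<n}"
    and x: "\<And>i. i < n \<Longrightarrow> x i = Max ((\<lambda>g. c g + g i) ` S)"
    using assms(2) unfolding colspace_def by (rule tspanE) (rule that)
  obtain g where g: "g \<in> S" "x k = c g + g k"
    using Max_image_attained[OF S(1,2), of "\<lambda>g. c g + g k"] x[OF assms(4)] by auto
  then obtain m where m: "m < n" "g = tcol n E m" using S(3) by auto
  have "c g + g i \<le> x i" using x[OF assms(3)] S(1) g(1) by simp
  moreover have "E i k + E k m \<le> E i m" using tidempotent_triangle[OF assms(1,3,4) m(1)] .
  ultimately show ?thesis using g(2) m(2) assms(3,4) unfolding tcol_def by simp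
qed

text \<open>With zero diagonal these inequalities say \<open>y = E \<otimes> y\<close>, a combination of the columns.\<close>
lemma in_colspaceI:
  assumes "n \<ge> 1" "y \<in> tvecs n" "\<And>j. j < n \<Longrightarrow> E j j = 0"
    and "\<And>i k. i < n \<Longrightarrow> k < n \<Longrightarrow> E i k + y k \<le> y i"
  shows "y \<in> colspace n E"
  unfolding colspace_def
proof (rule tspan_tcolI[where c = y])
  have "0 \<in> {..<n}" using assms(1) by simp
  then show "{..<n} \<noteq> {}" by blast
  fix i assume "i < n"
  with assms(3,4) show "y i = Max ((\<lambda>k. y k + E i k) ` {..<n})"
    by (intro Max_image_eqI[symmetric]) (auto simp: add.commute)
qed (use assms(2) in auto)

lemma full_rank_no_redundant_column:
  assumes "trank n E = n" "j < n"
  shows "tcol n E j \<notin> tspan n (tcol n E ` ({..<n} - {j}))"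
proof
  let ?G = "tcol n E ` ({..<n} - {j})"
  assume redundant: "tcol n E j \<in> tspan n ?G"
  have "tcol n E k \<in> tspan n ?G" if "k < n" for k
  proof (cases "k = j")
    case False
    with that show ?thesis by (intro tspan_generator tcol_in_tvecs) auto
  qed (use redundant in simp)
  then have "tcol n E ` {..<n} \<subseteq> tspan n ?G" by auto
  then have "colspace n E \<subseteq> tspan n ?G"
    unfolding colspace_def by (meson order_trans tspan_mono tspan_tspan_subset)
  moreover have "tspan n ?G \<subseteq> colspace n E" unfolding colspace_def by (intro tspan_mono image_mono) auto
  ultimately have "tspan n ?G = colspace n E" by blast
  then have "trank n E \<le> card ?G"
    unfolding trank_def by (intro Least_le exI[of _ ?G]) (auto simp: tcol_in_tvecs)
  also have "\<dots> \<le> card ({..<n} - {j})" by (rule card_image_le) simp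
  also have "\<dots> = n - 1" using assms(2) by simp
  finally show False using assms by linarith
qed

lemma full_rank_diag_zero:
  assumes "tidempotent n E" "trank n E = n" "j < n"
  shows "E j j = 0"
proof (rule ccontr)
  assume "E j j \<noteq> 0"
  moreover have "E j j + E j j \<le> E j j" by (rule tidempotent_triangle[OF assms(1,3,3,3)])
  ultimately have neg: "E j j < 0" by simp
  have E_attained: "\<exists>k \<in> {..<n} - {j}. E i j = E i k + E k j" if i: "i < n" for i
  proof -
    obtain k where "k < n" "tmul n E E i j = E i k + E k j"
      using tmul_attained[OF i assms(3)] .
    with neg assms(1) show ?thesis by (intro bexI[of _ k]) (auto simp: tidempotent_def)
  qed
  have "tcol n E j \<in> tspan n (tcol n E ` ({..<n} - {j}))"
  proof (rule tspan_tcolI[where c = "\<lambda>k. E k j"])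
    show "finite ({..<n} - {j})" "{..<n} - {j} \<subseteq> {..<n}" by auto
    show "{..<n} - {j} \<noteq> {}" using E_attained[OF assms(3)] by blast
    show "tcol n E j \<in> tvecs n" by (rule tcol_in_tvecs)
    fix i assume i: "i < n"
    then obtain k where k: "k \<in> {..<n} - {j}" "E i j = E i k + E k j" using E_attained by blast
    have "E k' j + E i k' \<le> E i j" if "k' \<in> {..<n} - {j}" for k'
      using tidempotent_triangle[OF assms(1) i _ assms(3), of k'] that by simp
    with k i show "tcol n E j i = Max ((\<lambda>k. E k j + E i k) ` ({..<n} - {j}))"
      by (intro Max_image_eqI[symmetric, where k = k]) (auto simp: tcol_def)
  qed
  with full_rank_no_redundant_column[OF assms(2,3)] show False by contradiction
qed

text \<open>If row \<open>i\<close> is row \<open>i'\<close> shifted, then \<open>E i i' + E i' i = 0\<close>, and the triangle inequality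
  makes column \<open>i\<close> a shift of column \<open>i'\<close>.\<close>
lemma full_rank_row_shift_unique:
  assumes E: "tidempotent n E" "trank n E = n" and "i < n" "i' < n"
    and shift: "\<And>l. l < n \<Longrightarrow> E i l = a + E i' l"
  shows "i = i'"
proof (rule ccontr)
  assume "i \<noteq> i'"
  have "E i' i' = 0" "E i i = 0" using full_rank_diag_zero E \<open>i < n\<close> \<open>i' < n\<close> by auto
  then have loop: "E i i' + E i' i = 0" using shift[OF \<open>i < n\<close>] shift[OF \<open>i' < n\<close>] by simp
  have col: "E l i = E i' i + E l i'" if "l < n" for l
    using tidempotent_triangle[OF E(1) that \<open>i' < n\<close> \<open>i < n\<close>]
      tidempotent_triangle[OF E(1) that \<open>i < n\<close> \<open>i' < n\<close>] loop
    by linarith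
  have "tcol n E i \<in> tspan n (tcol n E ` {i'})"
  proof (rule tspan_tcolI[where c = "\<lambda>_. E i' i"])
    show "finite {i'}" "{i'} \<noteq> {}" "{i'} \<subseteq> {..<n}" using \<open>i' < n\<close> by auto
    show "tcol n E i \<in> tvecs n" by (rule tcol_in_tvecs)
    fix l assume "l < n"
    with col[OF this] show "tcol n E i l = Max ((\<lambda>k. E i' i + E l k) ` {i'})" by (simp add: tcol_def)
  qed
  also have "\<dots> \<subseteq> tspan n (tcol n E ` ({..<n} - {i}))"
    using \<open>i' < n\<close> \<open>i \<noteq> i'\<close> by (intro tspan_mono image_mono) auto
  finally show False using full_rank_no_redundant_column[OF E(2) \<open>i < n\<close>] by contradiction
qed

lemma left_ideal_row_ge:
  assumes "tidempotent n E" "A \<in> left_ideal1 n E" "k < n" "m < n" "l < n"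
  shows "A k m + E m l \<le> A k l"
proof -
  consider "A = E" | s where "A = tmul n s E" using assms(2) unfolding left_ideal1_def by auto
  then show ?thesis
  proof cases
    case 1
    then show ?thesis using tidempotent_triangle[OF assms(1,3,4,5)] by simp
  next
    case (2 s)
    obtain p where p: "p < n" "tmul n s E k m = s k p + E p m" using tmul_attained[OF assms(3,4)] .
    have "s k p + E p l \<le> tmul n s E k l" by (rule tmul_ge[OF assms(3,5) p(1)])
    with p(2) tidempotent_triangle[OF assms(1) p(1) assms(4,5)] show ?thesis
      unfolding 2 by linarith
  qed
qed

lemma right_ideal_col_ge:
  assumes "tidempotent n E" "A \<in> right_ideal1 n E" "i < n" "k < n" "l < n"
  shows "E i k + A k l \<le> A i l"
proof -
  consider "A = E" | s where "A = tmul n E s" using assms(2) unfolding right_ideal1_def by auto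
  then show ?thesis
  proof cases
    case 1
    then show ?thesis using tidempotent_triangle[OF assms(1,3,4,5)] by simp
  next
    case (2 s)
    obtain p where p: "p < n" "tmul n E s k l = E k p + s p l" using tmul_attained[OF assms(4,5)] .
    have "E i p + s p l \<le> tmul n E s i l" by (rule tmul_ge[OF assms(3,5) p(1)])
    with p(2) tidempotent_triangle[OF assms(1,3,4) p(1)] show ?thesis
      unfolding 2 by linarith
  qed
qed

lemma right_ideal_tact_in_colspace:
  assumes "n \<ge> 1" "tidempotent n E" "\<And>j. j < n \<Longrightarrow> E j j = 0" "A \<in> right_ideal1 n E"
  shows "tact n A x \<in> colspace n E"
proof (rule in_colspaceI[OF assms(1) tact_in_tvecs assms(3)])
  fix i k assume i: "i < n" and k: "k < n"
  obtain l where l: "l < n" "tact n A x k = A k l + x l" using tact_attained[OF k] .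
  have "E i k + A k l \<le> A i l" by (rule right_ideal_col_ge[OF assms(2,4) i k l(1)])
  moreover have "A i l + x l \<le> tact n A x i" by (rule tact_ge[OF i l(1)])
  ultimately show "E i k + tact n A x k \<le> tact n A x i" using l(2) by linarith
qed

lemma row_shift_from_left_ideals:
  assumes "tidempotent n E" "A \<in> left_ideal1 n E" "E \<in> left_ideal1 n A" "i < n" "E i i = 0"
  shows "\<exists>k < n. \<forall>l < n. A k l = A k i + E i l"
proof -
  consider "E = A" | t where "E = tmul n t A" using assms(3) unfolding left_ideal1_def by auto
  then show ?thesis
  proof cases
    case 1
    then show ?thesis using assms(4,5) by auto
  next
    case (2 t)
    obtain k where k: "k < n" "tmul n t A i i = t i k + A k i" using tmul_attained[OF assms(4,4)] .
    have "A k l = A k i + E i l" if "l < n" for l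
    proof -
      have "t i k + A k l \<le> tmul n t A i l" by (rule tmul_ge[OF assms(4) that k(1)])
      moreover have "A k i + E i l \<le> A k l" by (rule left_ideal_row_ge[OF assms(1,2) k(1) assms(4) that])
      ultimately show ?thesis using k(2) assms(5) unfolding 2 by linarith
    qed
    with k(1) show ?thesis by blast
  qed
qed

lemma greenH_rows_shifted:
  assumes E: "tidempotent n E" "trank n E = n" and "greenH n A E"
  obtains \<tau> r where "\<And>k. k < n \<Longrightarrow> \<tau> k < n" "\<And>k l. k < n \<Longrightarrow> l < n \<Longrightarrow> A k l = r k + E (\<tau> k) l"
proof -
  have AE: "A \<in> left_ideal1 n E" and EA: "E \<in> left_ideal1 n A"
    using assms(3) unfolding greenH_def greenL_def left_ideal1_def by auto
  have "\<forall>i. \<exists>k. i < n \<longrightarrow> k < n \<and> (\<forall>l < n. A k l = A k i + E i l)"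
    using row_shift_from_left_ideals[OF E(1) AE EA _ full_rank_diag_zero[OF E]] by blast
  then obtain \<rho> where \<rho>_all: "\<forall>i. i < n \<longrightarrow> \<rho> i < n \<and> (\<forall>l < n. A (\<rho> i) l = A (\<rho> i) i + E i l)"
    by (rule choice[THEN exE])
  note \<rho> = \<rho>_all[rule_format]
  have "inj_on \<rho> {..<n}"
  proof (rule inj_onI)
    fix i i' assume "i \<in> {..<n}" "i' \<in> {..<n}" and eq: "\<rho> i = \<rho> i'"
    then have i: "i < n" "i' < n" by auto
    have "E i l = (A (\<rho> i) i' - A (\<rho> i) i) + E i' l" if "l < n" for l
      using \<rho>[OF i(1)] \<rho>[OF i(2)] that unfolding eq by force
    then show "i = i'" by (rule full_rank_row_shift_unique[OF E i])
  qed
  then have "\<rho> ` {..<n} = {..<n}" using \<rho> by (intro endo_inj_surj) auto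
  define \<tau> where "\<tau> = inv_into {..<n} \<rho>"
  have \<tau>: "\<tau> k < n" "\<rho> (\<tau> k) = k" if "k < n" for k
    using that \<open>\<rho> ` {..<n} = {..<n}\<close> inv_into_into[of k \<rho> "{..<n}"] f_inv_into_f[of k \<rho> "{..<n}"]
    unfolding \<tau>_def by auto
  show thesis
  proof
    show "A k l = A k (\<tau> k) + E (\<tau> k) l" if "k < n" "l < n" for k l
      using \<rho>[OF \<tau>(1)[OF that(1)]] \<tau>(2)[OF that(1)] that(2) by simp
  qed (use \<tau> in simp)
qed

text \<open>By \<open>colspace_triangle\<close>, the maximum defining \<open>tact n A x k\<close> is attained at \<open>l = j\<close>.\<close>
lemma tact_shifted_row:
  assumes "tidempotent n E" "x \<in> colspace n E" "k < n" "j < n" "E j j = 0"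
    and row: "\<And>l. l < n \<Longrightarrow> A k l = a + E j l"
  shows "tact n A x k = a + x j"
proof -
  obtain l where l: "l < n" "tact n A x k = A k l + x l" using tact_attained[OF assms(3)] .
  have "E j l + x l \<le> x j" by (rule colspace_triangle[OF assms(1,2,4) l(1)])
  moreover have "A k j + x j \<le> tact n A x k" by (rule tact_ge[OF assms(3,4)])
  ultimately show ?thesis using l(2) row[OF l(1)] row[OF assms(4)] assms(5) by linarith
qed

lemma sum_indicator_projcoord:
  assumes "a < n"
  shows "(\<Sum>j<n-1. of_bool (j = a) * projcoord n x j) = x a - x (n - 1)"
proof -
  have "(\<Sum>j<n-1. of_bool (j = a) * projcoord n x j) = (if a < n - 1 then projcoord n x a else 0)"
    by (simp add: sum.If_cases)
  also have "\<dots> = x a - x (n - 1)"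
  proof (cases "a < n - 1")
    case False
    with assms have "a = n - 1" by linarith
    with False show ?thesis by simp
  qed (simp add: projcoord_def)
  finally show ?thesis .
qed

lemma projcoord_permuted_shift:
  fixes x y r :: "nat \<Rightarrow> real"
  assumes y: "\<And>k. k < n \<Longrightarrow> y k = r k + x (\<tau> k)" and \<tau>: "\<And>k. k < n \<Longrightarrow> \<tau> k < n"
    and "i < n - 1"
  shows "projcoord n y i =
    (\<Sum>j<n-1. (of_bool (j = \<tau> i) - of_bool (j = \<tau> (n - 1))) * projcoord n x j) + (r i - r (n - 1))"
proof -
  have i: "i < n" and last: "n - 1 < n" using \<open>i < n - 1\<close> by auto
  have "projcoord n y i = y i - y (n - 1)" using \<open>i < n - 1\<close> by (simp add: projcoord_def)
  also have "\<dots> = (x (\<tau> i) - x (n - 1)) - (x (\<tau> (n - 1)) - x (n - 1)) + (r i - r (n - 1))"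
    using y[OF i] y[OF last] by simp
  also have "\<dots> = (\<Sum>j<n-1. (of_bool (j = \<tau> i) - of_bool (j = \<tau> (n - 1))) * projcoord n x j) + (r i - r (n - 1))"
    using sum_indicator_projcoord[OF \<tau>[OF i], of x] sum_indicator_projcoord[OF \<tau>[OF last], of x]
    by (simp add: left_diff_distrib sum_subtractf)
  finally show ?thesis .
qed

theorem corollary7p5:
  fixes n :: nat and E A :: "nat \<Rightarrow> nat \<Rightarrow> real"
  assumes "n \<ge> 1"
    and "tidempotent n E"
    and "trank n E = n"
    and "A \<in> tmats n"
    and "greenH n A E"
  shows "(\<forall>x \<in> colspace n E. tact n A x \<in> colspace n E) \<and>
    (\<exists>(M :: nat \<Rightarrow> nat \<Rightarrow> real) (b :: nat \<Rightarrow> real).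
       \<forall>x \<in> colspace n E. \<forall>i < n - 1.
         projcoord n (tact n A x) i = (\<Sum>j < n - 1. M i j * projcoord n x j) + b i)"
proof -
  note diag = full_rank_diag_zero[OF assms(2,3)]
  obtain \<tau> r where \<tau>: "\<And>k. k < n \<Longrightarrow> \<tau> k < n"
    and rows: "\<And>k l. k < n \<Longrightarrow> l < n \<Longrightarrow> A k l = r k + E (\<tau> k) l"
    by (rule greenH_rows_shifted[OF assms(2,3,5)]) (rule that)
  have act: "tact n A x k = r k + x (\<tau> k)" if "x \<in> colspace n E" "k < n" for x k
    by (rule tact_shifted_row[where a = "r k" and A = A,
          OF assms(2) that \<tau>[OF that(2)] diag[OF \<tau>[OF that(2)]] rows[OF that(2)]])
  have "A \<in> right_ideal1 n E"
    using assms(5) unfolding greenH_def greenR_def right_ideal1_def by auto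
  note closed = right_ideal_tact_in_colspace[OF assms(1,2) diag this]
  define M :: "nat \<Rightarrow> nat \<Rightarrow> real"
    where "M i j = of_bool (j = \<tau> i) - of_bool (j = \<tau> (n - 1))" for i j
  define b where "b i = r i - r (n - 1)" for i
  have affine: "projcoord n (tact n A x) i = (\<Sum>j<n-1. M i j * projcoord n x j) + b i"
    if "x \<in> colspace n E" "i < n - 1" for x i
    unfolding M_def b_def
    by (rule projcoord_permuted_shift[where r = r and x = x and \<tau> = \<tau>, OF act[OF that(1)] \<tau> that(2)])
  show ?thesis using closed affine by blast
qed

end
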